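(* Let $\mathbb V$ be a Schubert representation of $\widehat H_n$ with generic Schubert classes $\{\mathcal Y_w\}_{w\in S_n}$, evaluation map $\operatorname{ev}$ and equivariant parameters $t_1,\dots,t_n$. Let $w\in S_n$ and $f\in\mathcal A_\hbar[x_1,\dots,x_n]$, and suppose that in $\widehat H_n$ $$\overline T_wf=\sum_{u\in S_n}P_{u,w}(x_1,\dots,x_n)\,\overline T_u,\qquad P_{u,w}\in\mathcal A_\hbar[x_1,\dots,x_n].$$ Then for each $u\in S_n$, $f\cdot\mathcal Y_u=\sum_{w\in S_n}P_{u,w}(t_1,\dots,t_n)\,\mathcal Y_w$ in $\mathbb V$.
   Context: $\mathcal A=\mathbb Q[p,q]$, $\mathcal A_\hbar=\mathcal A[\hbar]$. The affine Hecke algebra $\widehat H_n$ over $\mathcal A_\hbar$ is generated by $T_1,\dots,T_{n-1}$ and $x_1,\dots,x_n$ subject to: $(T_i+p)(T_i-q)=0$; $T_iT_j=T_jT_i$ for $|i-j|>1$; $T_iT_{i+1}T_i=T_{i+1}T_iT_{i+1}$; $x_ix_j=x_jx_i$; $T_ix_j=x_jT_i$ for $j\ne i,i+1$; $T_ix_i=x_{i+1}T_i+(\hbar-(p-q)x_i)$; $T_ix_{i+1}=x_iT_i-(\hbar-(p-q)x_i)$. For $w\in S_n$ with reduced word $w=s_{i_1}\cdots s_{i_\ell}$, $T_w=T_{i_1}\cdots T_{i_\ell}$; $\overline T_i=T_i+p-q$ and $\overline T_w=\overline T_{i_1}\cdots\overline T_{i_\ell}$ (well defined). The elements $x^\alpha\overline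 T_w$ form an $\mathcal A_\hbar$-basis of $\widehat H_n$. A Schubert representation: a field $\mathbb F$ with elements $t_1,\dots,t_n\in\mathbb F$ (equivariant parameters), a ring map $\mathcal A_\hbar\to\mathbb F$ (images still written $p,q,\hbar$), and an $\mathbb F$-vector space $\mathbb V$ with an action of $\widehat H_n$ in which $\mathcal A_\hbar$ acts by these scalars, together with a distinguished $\mathcal Y_{w_0}\in\mathbb V$ ($w_0$ the longest element of $S_n$) such that $\mathcal Y_w:=T_{w^{-1}w_0}\cdot\mathcal Y_{w_0}$ ($w\in S_n$) form an $\mathbb F$-basis of $\mathbb V$, and an $\mathbb F$-linear map $\operatorname{ev}\colon\mathbb V\to\mathbb F$ with $\operatorname{ev}(\mathcal Y_w)\ne0\iff w=\mathrm{id}$ and $\operatorname{ev}(x_i\cdot\mathcal Y_w)=t_i\operatorname{ev}(\mathcal Y_w)$ for all $i,w$. $P(t_1,\dots,t_n)$ denotes the image of $P$ in $\mathbb F$ under $x_i\mapsto t_i$. *)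

theory Defs
  imports Complex_Main "HOL-Library.Poly_Mapping" "HOL-Combinatorics.Permutations"
begin

datatype avar = Vp | Vq | Vh

text \<open>Multivariate polynomials over Q in the three variables p, q, hbar.\<close>
type_synonym Ah = "(avar \<Rightarrow>\<^sub>0 nat) \<Rightarrow>\<^sub>0 rat"

definition pA :: Ah where "pA = Poly_Mapping.single (Poly_Mapping.single Vp 1) 1"
definition qA :: Ah where "qA = Poly_Mapping.single (Poly_Mapping.single Vq 1) 1"
definition hA :: Ah where "hA = Poly_Mapping.single (Poly_Mapping.single Vh 1) 1"

text \<open>Polynomials in x_1..x_n with coefficients in A_hbar: finitely supported maps
  from exponent vectors to coefficients; exponent vectors may only involve 1..n.\<close>
type_synonym Apoly = "(nat \<Rightarrow>\<^sub>0 nat) \<Rightarrow>\<^sub>0 Ah"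

definition is_xpoly :: "nat \<Rightarrow> Apoly \<Rightarrow> bool" where
  "is_xpoly n f \<longleftrightarrow> (\<forall>\<alpha>\<in>Poly_Mapping.keys f. Poly_Mapping.keys \<alpha> \<subseteq> {1..n})"

definition ring_hom_on :: "('a::comm_ring_1 \<Rightarrow> 'b::ring_1) \<Rightarrow> bool" where
  "ring_hom_on \<phi> \<longleftrightarrow> \<phi> 1 = 1 \<and> (\<forall>a b. \<phi> (a + b) = \<phi> a + \<phi> b) \<and> (\<forall>a b. \<phi> (a * b) = \<phi> a * \<phi> b)"

definition Sn :: "nat \<Rightarrow> (nat \<Rightarrow> nat) set" where
  "Sn n = {w. w permutes {1..n}}"

definition sgen :: "nat \<Rightarrow> nat \<Rightarrow> nat" where
  "sgen i = (\<lambda>j. if j = i then i + 1 else if j = i + 1 then i else j)"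

text \<open>Permutations compose as functions: the word [i1,...,il] denotes s_i1 o ... o s_il.\<close>
definition word_perm :: "nat list \<Rightarrow> nat \<Rightarrow> nat" where
  "word_perm ws = foldr (\<lambda>i w. sgen i \<circ> w) ws id"

definition reduced_word :: "nat \<Rightarrow> (nat \<Rightarrow> nat) \<Rightarrow> nat list \<Rightarrow> bool" where
  "reduced_word n w ws \<longleftrightarrow> set ws \<subseteq> {1..<n} \<and> word_perm ws = w \<and>
     (\<forall>vs. set vs \<subseteq> {1..<n} \<and> word_perm vs = w \<longrightarrow> length ws \<le> length vs)"

definition Tw :: "nat \<Rightarrow> (nat \<Rightarrow> 'h::ring_1) \<Rightarrow> (nat \<Rightarrow> nat) \<Rightarrow> 'h" where
  "Tw n T w = prod_list (map T (SOME ws. reduced_word n w ws))"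

definition Tbar :: "nat \<Rightarrow> (Ah \<Rightarrow> 'h::ring_1) \<Rightarrow> (nat \<Rightarrow> 'h) \<Rightarrow> (nat \<Rightarrow> nat) \<Rightarrow> 'h" where
  "Tbar n sc T w = Tw n (\<lambda>i. T i + sc pA - sc qA) w"

definition w0 :: "nat \<Rightarrow> nat \<Rightarrow> nat" where
  "w0 n = (\<lambda>i. if i \<in> {1..n} then n + 1 - i else i)"

definition xmon :: "(nat \<Rightarrow> 'h::comm_monoid_mult) \<Rightarrow> (nat \<Rightarrow>\<^sub>0 nat) \<Rightarrow> 'h" where
  "xmon x \<alpha> = (\<Prod>i\<in>Poly_Mapping.keys \<alpha>. x i ^ Poly_Mapping.lookup \<alpha> i)"

definition xmonH :: "(nat \<Rightarrow> 'h::ring_1) \<Rightarrow> (nat \<Rightarrow>\<^sub>0 nat) \<Rightarrow> 'h" where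
  "xmonH x \<alpha> = prod_list (map (\<lambda>i. x i ^ Poly_Mapping.lookup \<alpha> i) (sorted_list_of_set (Poly_Mapping.keys \<alpha>)))"

definition emb :: "(Ah \<Rightarrow> 'h::ring_1) \<Rightarrow> (nat \<Rightarrow> 'h) \<Rightarrow> Apoly \<Rightarrow> 'h" where
  "emb sc x f = (\<Sum>\<alpha>\<in>Poly_Mapping.keys f. sc (Poly_Mapping.lookup f \<alpha>) * xmonH x \<alpha>)"

definition evalP :: "(Ah \<Rightarrow> 'f::field) \<Rightarrow> (nat \<Rightarrow> 'f) \<Rightarrow> Apoly \<Rightarrow> 'f" where
  "evalP \<phi> t f = (\<Sum>\<alpha>\<in>Poly_Mapping.keys f. \<phi> (Poly_Mapping.lookup f \<alpha>) * xmon t \<alpha>)"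

definition affine_hecke ::
  "nat \<Rightarrow> (Ah \<Rightarrow> 'h::ring_1) \<Rightarrow> (nat \<Rightarrow> 'h) \<Rightarrow> (nat \<Rightarrow> 'h) \<Rightarrow> bool" where
  "affine_hecke n sc T x \<longleftrightarrow>
     ring_hom_on sc \<and> (\<forall>a h. sc a * h = h * sc a) \<and>
     (\<forall>i\<in>{1..<n}. (T i + sc pA) * (T i - sc qA) = 0) \<and>
     (\<forall>i\<in>{1..<n}. \<forall>j\<in>{1..<n}. (i + 1 < j \<or> j + 1 < i) \<longrightarrow> T i * T j = T j * T i) \<and>
     (\<forall>i. 1 \<le> i \<and> i + 1 < n \<longrightarrow> T i * T (i+1) * T i = T (i+1) * T i * T (i+1)) \<and>
     (\<forall>i\<in>{1..n}. \<forall>j\<in>{1..n}. x i * x j = x j * x i) \<and>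
     (\<forall>i\<in>{1..<n}. \<forall>j\<in>{1..n}. j \<noteq> i \<and> j \<noteq> i + 1 \<longrightarrow> T i * x j = x j * T i) \<and>
     (\<forall>i\<in>{1..<n}. T i * x i = x (i+1) * T i + (sc hA - (sc pA - sc qA) * x i)) \<and>
     (\<forall>i\<in>{1..<n}. T i * x (i+1) = x i * T i - (sc hA - (sc pA - sc qA) * x i)) \<and>
     (\<forall>h. \<exists>!c :: ((nat \<Rightarrow>\<^sub>0 nat) \<times> (nat \<Rightarrow> nat)) \<Rightarrow> Ah.
        finite {k. c k \<noteq> 0} \<and>
        (\<forall>k. c k \<noteq> 0 \<longrightarrow> Poly_Mapping.keys (fst k) \<subseteq> {1..n} \<and> snd k \<in> Sn n) \<and>
        h = (\<Sum>k\<in>{k. c k \<noteq> 0}. sc (c k) * (xmonH x (fst k) * Tbar n sc T (snd k))))"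

definition schubert_rep ::
  "nat \<Rightarrow> (Ah \<Rightarrow> 'h::ring_1) \<Rightarrow> (nat \<Rightarrow> 'h) \<Rightarrow> (nat \<Rightarrow> 'h) \<Rightarrow>
   (Ah \<Rightarrow> 'f::field) \<Rightarrow> (nat \<Rightarrow> 'f) \<Rightarrow> ('f \<Rightarrow> 'v::ab_group_add \<Rightarrow> 'v) \<Rightarrow>
   ('h \<Rightarrow> 'v \<Rightarrow> 'v) \<Rightarrow> ((nat \<Rightarrow> nat) \<Rightarrow> 'v) \<Rightarrow> ('v \<Rightarrow> 'f) \<Rightarrow> bool" where
  "schubert_rep n sc T x \<phi> t scale act Y ev \<longleftrightarrow>
     ring_hom_on \<phi> \<and>
     vector_space scale \<and>
     (\<forall>h1 h2 v. act (h1 + h2) v = act h1 v + act h2 v) \<and>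
     (\<forall>h v1 v2. act h (v1 + v2) = act h v1 + act h v2) \<and>
     (\<forall>h c v. act h (scale c v) = scale c (act h v)) \<and>
     (\<forall>h1 h2 v. act (h1 * h2) v = act h1 (act h2 v)) \<and>
     (\<forall>v. act 1 v = v) \<and>
     (\<forall>a v. act (sc a) v = scale (\<phi> a) v) \<and>
     (\<forall>w\<in>Sn n. Y w = act (Tw n T (inv w \<circ> w0 n)) (Y (w0 n))) \<and>
     inj_on Y (Sn n) \<and>
     module.independent scale (Y ` Sn n) \<and>
     module.span scale (Y ` Sn n) = UNIV \<and>
     Vector_Spaces.linear scale (*) ev \<and>
     (\<forall>w\<in>Sn n. ev (Y w) \<noteq> 0 \<longleftrightarrow> w = id) \<and>
     (\<forall>i\<in>{1..n}. \<forall>w\<in>Sn n. ev (act (x i) (Y w)) = t i * ev (Y w))"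

end

theory Submission
  imports Defs
begin

(* The functionals v |-> ev (Tbar_w v), w in S_n, form the dual basis of the Schubert basis up to
   the nonzero factor ev Y_id:  ev (Tbar_w Y_v) = [v = w] ev Y_id.  This follows by induction along
   a reduced word of w, because the quadratic relation gives Tbar_i Y_v = Y_(v s_i) + (p - q) Y_v
   when i is a descent of v and Tbar_i Y_v = p q Y_(v s_i) when it is an ascent; the underlying
   identity T_i Y_v = Y_(v s_i) needs Matsumoto's theorem, as T_w is defined through an arbitrary
   reduced word.  Since ev (g v) = g(t) ev v for every polynomial g, applying ev (Tbar_w _) to
   f Y_u and expanding Tbar_w f = sum_u P_(u,w) Tbar_u gives P_(u,w)(t) ev Y_id, which is therefore
   the coefficient of Y_w in f Y_u. *)

section \<open>Inversions and the length of a permutation\<close>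

definition inversions :: "nat \<Rightarrow> (nat \<Rightarrow> nat) \<Rightarrow> (nat \<times> nat) set" where
  "inversions n w = {(a, b). a \<in> {1..n} \<and> b \<in> {1..n} \<and> a < b \<and> w b < w a}"

definition perm_length :: "nat \<Rightarrow> (nat \<Rightarrow> nat) \<Rightarrow> nat" where
  "perm_length n w = card (inversions n w)"

lemma finite_inversions: "finite (inversions n w)"
  by (rule finite_subset[of _ "{1..n} \<times> {1..n}"]) (auto simp: inversions_def)

lemma perm_length_id [simp]: "perm_length n id = 0"
proof -
  have "inversions n id = {}" by (auto simp: inversions_def)
  then show ?thesis by (simp add: perm_length_def)
qed

lemma sgen_permutes: "i \<in> {1..<n} \<Longrightarrow> sgen i permutes {1..n}"
proof -
  assume "i \<in> {1..<n}"
  then have "Transposition.transpose i (Suc i) permutes {1..n}"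
    by (intro permutes_swap_id) auto
  moreover have "sgen i = Transposition.transpose i (Suc i)"
    by (auto simp: sgen_def Transposition.transpose_def fun_eq_iff)
  ultimately show ?thesis by simp
qed

lemma sgen_sgen [simp]: "sgen i (sgen i j) = j"
  by (auto simp: sgen_def)

lemma sgen_comp_sgen [simp]: "sgen i \<circ> sgen i = id"
  by (auto simp: fun_eq_iff)

lemma sgen_apply_Suc [simp]: "sgen i (Suc i) = i" and sgen_apply_self [simp]: "sgen i i = Suc i"
  by (auto simp: sgen_def)

lemma inj_sgen: "inj (sgen i)"
  by (metis injI sgen_sgen)

lemma permutes_apply_Suc_neq: "w permutes S \<Longrightarrow> w i \<noteq> w (Suc i)"
  by (metis permutes_inj inj_eq n_not_Suc_n)

lemma sgen_mono_off_pair: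
  assumes "a < b" "(a, b) \<noteq> (i, Suc i)"
  shows "sgen i a < sgen i b"
  using assms unfolding sgen_def by auto

lemma sgen_maps_inversions:
  assumes i: "i \<in> {1..<n}" and ab: "(a, b) \<in> inversions n v - {(i, Suc i)}"
  shows "(sgen i a, sgen i b) \<in> inversions n (v \<circ> sgen i) - {(i, Suc i)}"
proof -
  have "a < b" "(a, b) \<noteq> (i, Suc i)" "a \<in> {1..n}" "b \<in> {1..n}" "v b < v a"
    using ab by (auto simp: inversions_def)
  moreover have "(sgen i a, sgen i b) \<noteq> (i, Suc i)"
  proof
    assume "(sgen i a, sgen i b) = (i, Suc i)"
    then have "a = Suc i" "b = i"
      using sgen_sgen[of i a] sgen_sgen[of i b] by auto
    with \<open>a < b\<close> show False by simp
  qed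
  moreover have "sgen i c \<in> {1..n}" if "c \<in> {1..n}" for c
    using that i by (auto simp: sgen_def)
  ultimately show ?thesis
    using sgen_mono_off_pair[of a b i] by (simp add: inversions_def)
qed

(* (a, b) |-> (s_i a, s_i b) matches the inversions of w and of w s_i other than (i, i + 1). *)
lemma perm_length_comp_sgen_ascent:
  assumes i: "i \<in> {1..<n}" and asc: "w i < w (Suc i)"
  shows "perm_length n (w \<circ> sgen i) = Suc (perm_length n w)"
proof -
  let ?E = "{(i, Suc i)}"
  let ?f = "\<lambda>(a, b). (sgen i a, sgen i b)"
  have "?f ` (inversions n w - ?E) \<subseteq> inversions n (w \<circ> sgen i) - ?E"
  proof
    fix p assume "p \<in> ?f ` (inversions n w - ?E)"
    then obtain a b where "(a, b) \<in> inversions n w - ?E" "p = (sgen i a, sgen i b)"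
      by (auto simp: image_iff)
    then show "p \<in> inversions n (w \<circ> sgen i) - ?E"
      by (simp only: sgen_maps_inversions[OF i])
  qed
  moreover have "inversions n (w \<circ> sgen i) - ?E \<subseteq> ?f ` (inversions n w - ?E)"
  proof
    fix p assume p: "p \<in> inversions n (w \<circ> sgen i) - ?E"
    obtain a b where ab: "p = (a, b)" by fastforce
    have "(sgen i a, sgen i b) \<in> inversions n w - ?E"
      using sgen_maps_inversions[OF i, of a b "w \<circ> sgen i"] p ab by (simp add: comp_assoc)
    moreover have "p = ?f (sgen i a, sgen i b)" using ab by simp
    ultimately show "p \<in> ?f ` (inversions n w - ?E)" by blast
  qed
  ultimately have "?f ` (inversions n w - ?E) = inversions n (w \<circ> sgen i) - ?E"
    by (rule subset_antisym)
  moreover have "inj ?f"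
    using inj_sgen by (auto simp: inj_def)
  ultimately have "card (inversions n (w \<circ> sgen i) - ?E) = card (inversions n w - ?E)"
    by (metis card_image inj_on_subset subset_UNIV)
  moreover have "(i, Suc i) \<in> inversions n (w \<circ> sgen i)" "(i, Suc i) \<notin> inversions n w"
    using i asc by (auto simp: inversions_def)
  ultimately show ?thesis
    unfolding perm_length_def by (metis card_Suc_Diff1 Diff_empty Diff_insert0 finite_inversions)
qed

lemma perm_length_comp_sgen_descent:
  assumes i: "i \<in> {1..<n}" and desc: "w (Suc i) < w i"
  shows "perm_length n w = Suc (perm_length n (w \<circ> sgen i))"
  using perm_length_comp_sgen_ascent[OF i, of "w \<circ> sgen i"] desc by (simp add: comp_assoc)

lemma perm_length_inv:
  assumes w: "w permutes {1..n}"
  shows "perm_length n (inv w) = perm_length n w"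
proof -
  let ?f = "\<lambda>(a, b). (w b, w a)"
  have in_range: "w a \<in> {1..n} \<longleftrightarrow> a \<in> {1..n}" for a
    by (rule permutes_in_image[OF w])
  have "inversions n (inv w) = ?f ` inversions n w"
  proof (rule set_eqI, rule iffI)
    fix p assume "p \<in> inversions n (inv w)"
    moreover obtain c d where "p = (c, d)" by fastforce
    ultimately have "(inv w d, inv w c) \<in> inversions n w" "p = ?f (inv w d, inv w c)"
      using in_range[of "inv w c"] in_range[of "inv w d"]
      by (auto simp: inversions_def permutes_inverses[OF w])
    then show "p \<in> ?f ` inversions n w" by blast
  next
    fix p assume "p \<in> ?f ` inversions n w"
    then obtain a b where "(a, b) \<in> inversions n w" "p = (w b, w a)"
      by (auto simp: image_iff)
    then show "p \<in> inversions n (inv w)"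
      using in_range[of a] in_range[of b] by (auto simp: inversions_def permutes_inverses[OF w])
  qed
  moreover have "inj ?f"
    using permutes_inj[OF w] by (auto simp: inj_def)
  ultimately show ?thesis
    unfolding perm_length_def by (simp add: card_image inj_on_subset)
qed

lemma inv_sgen_comp: "bij w \<Longrightarrow> inv (sgen i \<circ> w) = inv w \<circ> sgen i"
  by (metis o_inv_distrib inv_unique_comp sgen_comp_sgen bij_betw_def inj_sgen
      surj_def sgen_sgen)

lemma inv_comp_sgen: "bij w \<Longrightarrow> inv (w \<circ> sgen i) = sgen i \<circ> inv w"
  by (metis o_inv_distrib inv_unique_comp sgen_comp_sgen bij_betw_def inj_sgen
      surj_def sgen_sgen)

lemma comp_sgen_eq_iff: "v \<circ> sgen i = y \<longleftrightarrow> v = y \<circ> sgen i"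
  by (metis comp_assoc comp_id sgen_comp_sgen)

lemma perm_length_sgen_comp_ascent:
  assumes w: "w permutes {1..n}" and i: "i \<in> {1..<n}" and asc: "inv w i < inv w (Suc i)"
  shows "perm_length n (sgen i \<circ> w) = Suc (perm_length n w)"
proof -
  have "perm_length n (sgen i \<circ> w) = perm_length n (inv w \<circ> sgen i)"
    using perm_length_inv[OF permutes_compose[OF w sgen_permutes[OF i]]]
    by (simp add: inv_sgen_comp permutes_bij[OF w])
  also have "\<dots> = Suc (perm_length n (inv w))"
    by (rule perm_length_comp_sgen_ascent[OF i asc])
  finally show ?thesis
    by (simp add: perm_length_inv[OF w])
qed

lemma perm_length_sgen_comp_descent:
  assumes w: "w permutes {1..n}" and i: "i \<in> {1..<n}" and desc: "inv w (Suc i) < inv w i"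
  shows "perm_length n w = Suc (perm_length n (sgen i \<circ> w))"
  using perm_length_sgen_comp_ascent[OF permutes_compose[OF w sgen_permutes[OF i]] i] desc
  by (simp add: inv_sgen_comp permutes_bij[OF w] comp_assoc[symmetric])

lemma perm_length_sgen_comp_le:
  assumes w: "w permutes {1..n}" and i: "i \<in> {1..<n}"
  shows "perm_length n (sgen i \<circ> w) \<le> Suc (perm_length n w)"
  using perm_length_sgen_comp_ascent[OF w i] perm_length_sgen_comp_descent[OF w i]
    permutes_apply_Suc_neq[OF permutes_inv[OF w], of i]
  by (cases "inv w i < inv w (Suc i)") auto

lemma word_perm_Nil [simp]: "word_perm [] = id"
  by (simp add: word_perm_def)

lemma word_perm_Cons [simp]: "word_perm (i # ws) = sgen i \<circ> word_perm ws"
  by (simp add: word_perm_def)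

lemma word_perm_snoc: "word_perm (ws @ [i]) = word_perm ws \<circ> sgen i"
  by (induction ws) (auto simp: comp_assoc)

lemma word_perm_permutes: "set ws \<subseteq> {1..<n} \<Longrightarrow> word_perm ws permutes {1..n}"
proof (induction ws)
  case (Cons i ws)
  then have "word_perm ws permutes {1..n}" "i \<in> {1..<n}" by auto
  then show ?case
    unfolding word_perm_Cons by (rule permutes_compose[OF _ sgen_permutes])
qed (simp add: permutes_id)

lemma perm_length_word_perm_le: "set ws \<subseteq> {1..<n} \<Longrightarrow> perm_length n (word_perm ws) \<le> length ws"
proof (induction ws)
  case (Cons i ws)
  then have "i \<in> {1..<n}" "set ws \<subseteq> {1..<n}" by auto
  then have "perm_length n (sgen i \<circ> word_perm ws) \<le> Suc (length ws)"
    using perm_length_sgen_comp_le[OF word_perm_permutes] Cons.IH le_trans by fastforce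
  then show ?case by (simp only: word_perm_Cons list.size(4))
qed simp

lemma permutes_ascending_eq_id:
  assumes w: "w permutes {1..n}" and asc: "\<forall>i\<in>{1..<n}. w i < w (Suc i)"
  shows "w = id"
proof -
  have "i \<le> w i" if "i \<in> {1..n}" for i
    using that
  proof (induction i)
    case (Suc i)
    show ?case
    proof (cases "i = 0")
      case True
      then show ?thesis using permutes_in_image[OF w, of "Suc i"] Suc.prems by auto
    next
      case False
      with Suc.prems have "i \<in> {1..<n}" by auto
      then show ?thesis using Suc.IH asc by fastforce
    qed
  qed simp
  then show ?thesis by (rule permutes_natset_ge[OF w, rule_format])
qed

lemma perm_length_eq_0_imp_id:
  assumes w: "w permutes {1..n}" and "perm_length n w = 0"
  shows "w = id"
proof (rule permutes_ascending_eq_id[OF w], rule ballI)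
  fix i assume "i \<in> {1..<n}"
  then have "(i, Suc i) \<notin> inversions n w"
    using assms(2) finite_inversions by (auto simp: perm_length_def)
  then show "w i < w (Suc i)"
    using \<open>i \<in> {1..<n}\<close> permutes_apply_Suc_neq[OF w, of i] by (auto simp: inversions_def)
qed

lemma exists_left_descent:
  assumes w: "w permutes {1..n}" and "w \<noteq> id"
  obtains i where "i \<in> {1..<n}" "inv w (Suc i) < inv w i"
proof -
  have "inv w \<noteq> id"
    using assms(2) by (metis inv_id permutes_inv_inv[OF w])
  then have "\<not> (\<forall>i\<in>{1..<n}. inv w i < inv w (Suc i))"
    using permutes_ascending_eq_id[OF permutes_inv[OF w]] by blast
  then show ?thesis
    using that permutes_apply_Suc_neq[OF permutes_inv[OF w]] by (meson linorder_neqE_nat)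
qed

lemma exists_word_of_perm_length:
  "w permutes {1..n} \<Longrightarrow>
    \<exists>ws. set ws \<subseteq> {1..<n} \<and> word_perm ws = w \<and> length ws = perm_length n w"
proof (induction "perm_length n w" arbitrary: w)
  case 0
  then have "w = id" using perm_length_eq_0_imp_id by simp
  then show ?case using "0.hyps" by (intro exI[of _ "[]"]) simp
next
  case (Suc k)
  then obtain i where i: "i \<in> {1..<n}" "inv w (Suc i) < inv w i"
    using exists_left_descent by (metis nat.distinct(1) perm_length_id)
  then have "perm_length n w = Suc (perm_length n (sgen i \<circ> w))"
    using perm_length_sgen_comp_descent[OF Suc.prems] by blast
  moreover obtain ws where "set ws \<subseteq> {1..<n}" "word_perm ws = sgen i \<circ> w"
      "length ws = perm_length n (sgen i \<circ> w)"
    using Suc calculation permutes_compose[OF Suc.prems sgen_permutes[OF i(1)]] by force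
  ultimately show ?case
    using i by (intro exI[of _ "i # ws"]) (simp add: comp_assoc[symmetric])
qed

section \<open>Reduced words and Matsumoto's theorem\<close>

definition reduced :: "nat \<Rightarrow> nat list \<Rightarrow> bool" where
  "reduced n ws \<longleftrightarrow> set ws \<subseteq> {1..<n} \<and> length ws = perm_length n (word_perm ws)"

lemma exists_reduced:
  assumes "w permutes {1..n}"
  obtains ws where "reduced n ws" "word_perm ws = w"
  using exists_word_of_perm_length[OF assms] by (auto simp: reduced_def)

lemma reduced_word_iff:
  assumes w: "w permutes {1..n}"
  shows "reduced_word n w ws \<longleftrightarrow> reduced n ws \<and> word_perm ws = w"
proof
  assume r: "reduced_word n w ws"
  obtain vs where "reduced n vs" "word_perm vs = w"
    using exists_reduced[OF w] .
  then have "length ws \<le> perm_length n w"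
    using r by (auto simp: reduced_word_def reduced_def)
  moreover have "perm_length n w \<le> length ws"
    using r perm_length_word_perm_le by (auto simp: reduced_word_def)
  ultimately show "reduced n ws \<and> word_perm ws = w"
    using r by (auto simp: reduced_word_def reduced_def)
next
  assume "reduced n ws \<and> word_perm ws = w"
  then show "reduced_word n w ws"
    using perm_length_word_perm_le by (fastforce simp: reduced_word_def reduced_def)
qed

lemma reduced_SOME_reduced_word:
  assumes w: "w permutes {1..n}"
  shows "reduced n (SOME ws. reduced_word n w ws) \<and> word_perm (SOME ws. reduced_word n w ws) = w"
proof -
  obtain ws where "reduced n ws" "word_perm ws = w"
    using exists_reduced[OF w] .
  then have "reduced_word n w (SOME ws. reduced_word n w ws)"
    using reduced_word_iff[OF w] by (metis someI)
  then show ?thesis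
    using reduced_word_iff[OF w] by blast
qed

lemma reduced_Cons:
  assumes "reduced n (i # ws)"
  shows "reduced n ws" and "inv (word_perm (i # ws)) (Suc i) < inv (word_perm (i # ws)) i"
proof -
  have ws: "set ws \<subseteq> {1..<n}" and i: "i \<in> {1..<n}"
    using assms by (auto simp: reduced_def)
  let ?w = "word_perm ws"
  have w: "?w permutes {1..n}"
    by (rule word_perm_permutes[OF ws])
  have "perm_length n (sgen i \<circ> ?w) = Suc (length ws)"
    using assms by (simp add: reduced_def)
  moreover have "perm_length n (sgen i \<circ> ?w) \<le> Suc (perm_length n ?w)"
    by (rule perm_length_sgen_comp_le[OF w i])
  moreover have "perm_length n ?w \<le> length ws"
    by (rule perm_length_word_perm_le[OF ws])
  ultimately have len: "perm_length n (sgen i \<circ> ?w) = Suc (perm_length n ?w)"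
    "length ws = perm_length n ?w"
    by linarith+
  then show "reduced n ws"
    using ws by (simp add: reduced_def)
  have "inv ?w i < inv ?w (Suc i)"
  proof (rule ccontr)
    assume "\<not> inv ?w i < inv ?w (Suc i)"
    then have "inv ?w (Suc i) < inv ?w i"
      using permutes_apply_Suc_neq[OF permutes_inv[OF w], of i] by linarith
    from perm_length_sgen_comp_descent[OF w i this] len(1) show False
      by linarith
  qed
  moreover have "inv (word_perm (i # ws)) = inv ?w \<circ> sgen i"
    by (simp only: word_perm_Cons inv_sgen_comp[OF permutes_bij[OF w]])
  ultimately show "inv (word_perm (i # ws)) (Suc i) < inv (word_perm (i # ws)) i"
    by (simp only: o_apply sgen_apply_Suc sgen_apply_self)
qed

lemma reduced_snoc:
  assumes "reduced n (ws @ [i])"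
  shows "reduced n ws" and "word_perm ws i < word_perm ws (Suc i)"
proof -
  have ws: "set ws \<subseteq> {1..<n}" and i: "i \<in> {1..<n}"
    using assms by (auto simp: reduced_def)
  let ?w = "word_perm ws"
  have w: "?w permutes {1..n}"
    by (rule word_perm_permutes[OF ws])
  have len: "perm_length n (?w \<circ> sgen i) = Suc (length ws)"
    using assms by (simp add: reduced_def word_perm_snoc)
  have le: "perm_length n ?w \<le> length ws"
    by (rule perm_length_word_perm_le[OF ws])
  show asc: "?w i < ?w (Suc i)"
  proof (rule ccontr)
    assume "\<not> ?w i < ?w (Suc i)"
    then have "?w (Suc i) < ?w i"
      using permutes_apply_Suc_neq[OF w, of i] by linarith
    from perm_length_comp_sgen_descent[OF i this] len le show False
      by linarith
  qed
  show "reduced n ws"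
    using perm_length_comp_sgen_ascent[OF i asc] len ws unfolding reduced_def by linarith
qed

lemma reduced_if_same_perm_length:
  assumes "reduced n u" "set v \<subseteq> {1..<n}" "word_perm v = word_perm u" "length v = length u"
  shows "reduced n v"
  using assms by (simp add: reduced_def)

lemma sgen_commute: "Suc i < j \<or> Suc j < i \<Longrightarrow> sgen i (sgen j a) = sgen j (sgen i a)"
  by (auto simp: sgen_def)

lemma sgen_braid: "sgen i (sgen (Suc i) (sgen i a)) = sgen (Suc i) (sgen i (sgen (Suc i) a))"
  by (auto simp: sgen_def)

lemma perm_length_far_descents:
  assumes x: "x permutes {1..n}" and i: "i \<in> {1..<n}" and j: "j \<in> {1..<n}"
    and far: "Suc i < j \<or> Suc j < i"
    and di: "inv x (Suc i) < inv x i" and dj: "inv x (Suc j) < inv x j"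
  shows "perm_length n x = Suc (Suc (perm_length n (sgen i \<circ> sgen j \<circ> x)))"
proof -
  have y: "sgen j \<circ> x permutes {1..n}"
    by (rule permutes_compose[OF x sgen_permutes[OF j]])
  have "inv (sgen j \<circ> x) (Suc i) < inv (sgen j \<circ> x) i"
  proof -
    have "sgen j (Suc i) = Suc i" "sgen j i = i"
      using far by (auto simp: sgen_def)
    then show ?thesis
      unfolding inv_sgen_comp[OF permutes_bij[OF x]] using di by simp
  qed
  then show ?thesis
    using perm_length_sgen_comp_descent[OF x j dj] perm_length_sgen_comp_descent[OF y i]
    by (simp add: comp_assoc)
qed

lemma perm_length_adjacent_descents:
  assumes x: "x permutes {1..n}" and i: "i \<in> {1..<n}" and i': "Suc i \<in> {1..<n}"
    and di: "inv x (Suc i) < inv x i" and di': "inv x (Suc (Suc i)) < inv x (Suc i)"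
  shows "perm_length n x = Suc (Suc (Suc (perm_length n (sgen i \<circ> sgen (Suc i) \<circ> sgen i \<circ> x))))"
proof -
  have y1: "sgen i \<circ> x permutes {1..n}"
    by (rule permutes_compose[OF x sgen_permutes[OF i]])
  have y2: "sgen (Suc i) \<circ> (sgen i \<circ> x) permutes {1..n}"
    by (rule permutes_compose[OF y1 sgen_permutes[OF i']])
  have "inv (sgen i \<circ> x) (Suc (Suc i)) < inv (sgen i \<circ> x) (Suc i)"
    unfolding inv_sgen_comp[OF permutes_bij[OF x]] using di di' by (simp add: sgen_def)
  moreover have "inv (sgen (Suc i) \<circ> (sgen i \<circ> x)) (Suc i) < inv (sgen (Suc i) \<circ> (sgen i \<circ> x)) i"
    unfolding inv_sgen_comp[OF permutes_bij[OF y1]] inv_sgen_comp[OF permutes_bij[OF x]]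
    using di' by (simp add: sgen_def)
  ultimately show ?thesis
    using perm_length_sgen_comp_descent[OF x i di] perm_length_sgen_comp_descent[OF y1 i']
      perm_length_sgen_comp_descent[OF y2 i]
    by (simp add: comp_assoc)
qed

lemma reduced_Cons_length:
  assumes "reduced n (i # ws)"
  shows "perm_length n (word_perm (i # ws)) = Suc (length ws)"
  using assms by (simp add: reduced_def)

lemma word_perm_Cons_cancel: "word_perm ws = sgen i \<circ> word_perm (i # ws)"
  by (simp add: comp_assoc[symmetric])

lemma prod_reduced_eq_far_step:
  fixes T :: "nat \<Rightarrow> 'a::monoid_mult"
  assumes IH: "\<And>u v. reduced n u \<Longrightarrow> reduced n v \<Longrightarrow> word_perm u = word_perm v \<Longrightarrow>
      length u = length b \<Longrightarrow> prod_list (map T u) = prod_list (map T v)"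
    and b: "reduced n (i # b)" and c: "reduced n (j # c)"
    and eq: "word_perm (i # b) = word_perm (j # c)"
    and far: "Suc i < j \<or> Suc j < i" and Tij: "T i * T j = T j * T i"
  shows "prod_list (map T (i # b)) = prod_list (map T (j # c))"
proof -
  define x where "x = word_perm (i # b)"
  have i: "i \<in> {1..<n}" and j: "j \<in> {1..<n}"
    using b c by (auto simp: reduced_def)
  have x: "x permutes {1..n}"
    unfolding x_def using b by (intro word_perm_permutes) (simp add: reduced_def)
  have di: "inv x (Suc i) < inv x i" and dj: "inv x (Suc j) < inv x j"
    using reduced_Cons(2)[OF b] reduced_Cons(2)[OF c] eq by (simp_all add: x_def)
  obtain d where d: "reduced n d" "word_perm d = sgen i \<circ> sgen j \<circ> x"
    using exists_reduced permutes_compose[OF x permutes_compose[OF sgen_permutes[OF j] sgen_permutes[OF i]]]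
    by blast
  have "perm_length n x = Suc (Suc (length d))"
    using perm_length_far_descents[OF x i j far di dj] d by (simp add: reduced_def)
  then have len: "length b = Suc (length d)" "length c = Suc (length d)"
    using reduced_Cons_length[OF b] reduced_Cons_length[OF c] eq by (simp_all add: x_def)
  have d_set: "set d \<subseteq> {1..<n}"
    using d(1) by (simp add: reduced_def)
  have wb: "word_perm (j # d) = word_perm b"
    using d(2) sgen_commute[OF far] by (simp add: x_def fun_eq_iff)
  have jd: "reduced n (j # d)"
    by (rule reduced_if_same_perm_length[OF reduced_Cons(1)[OF b]]) (use d_set j wb len in simp_all)
  have Pb: "prod_list (map T b) = prod_list (map T (j # d))"
    by (rule IH[OF reduced_Cons(1)[OF b] jd]) (use wb in simp_all)
  have wc: "word_perm (i # d) = word_perm c"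
    using d(2) eq by (simp add: x_def fun_eq_iff)
  have i_d: "reduced n (i # d)"
    by (rule reduced_if_same_perm_length[OF reduced_Cons(1)[OF c]]) (use d_set i wc len in simp_all)
  have Pc: "prod_list (map T c) = prod_list (map T (i # d))"
    by (rule IH[OF reduced_Cons(1)[OF c] i_d]) (use wc len in simp_all)
  show ?thesis
    by (simp add: Pb Pc mult.assoc[symmetric] Tij)
qed

lemma prod_reduced_eq_braid_step:
  fixes T :: "nat \<Rightarrow> 'a::monoid_mult"
  assumes IH: "\<And>u v. reduced n u \<Longrightarrow> reduced n v \<Longrightarrow> word_perm u = word_perm v \<Longrightarrow>
      length u = length b \<Longrightarrow> prod_list (map T u) = prod_list (map T v)"
    and b: "reduced n (i # b)" and c: "reduced n (Suc i # c)"
    and eq: "word_perm (i # b) = word_perm (Suc i # c)"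
    and braid: "T i * T (Suc i) * T i = T (Suc i) * T i * T (Suc i)"
  shows "prod_list (map T (i # b)) = prod_list (map T (Suc i # c))"
proof -
  define x where "x = word_perm (i # b)"
  have i: "i \<in> {1..<n}" and i': "Suc i \<in> {1..<n}"
    using b c by (auto simp: reduced_def)
  have x: "x permutes {1..n}"
    unfolding x_def using b by (intro word_perm_permutes) (simp add: reduced_def)
  have di: "inv x (Suc i) < inv x i" and di': "inv x (Suc (Suc i)) < inv x (Suc i)"
    using reduced_Cons(2)[OF b] reduced_Cons(2)[OF c] eq by (simp_all add: x_def)
  obtain d where d: "reduced n d" "word_perm d = sgen i \<circ> sgen (Suc i) \<circ> sgen i \<circ> x"
    using exists_reduced permutes_compose[OF x permutes_compose[OF sgen_permutes[OF i]
        permutes_compose[OF sgen_permutes[OF i'] sgen_permutes[OF i]]]]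
    by blast
  have "perm_length n x = Suc (Suc (Suc (length d)))"
    using perm_length_adjacent_descents[OF x i i' di di'] d by (simp add: reduced_def)
  then have len: "length b = Suc (Suc (length d))" "length c = Suc (Suc (length d))"
    using reduced_Cons_length[OF b] reduced_Cons_length[OF c] eq by (simp_all add: x_def)
  have d_set: "set d \<subseteq> {1..<n}"
    using d(1) by (simp add: reduced_def)
  have wb: "word_perm (Suc i # i # d) = word_perm b"
    using d(2) by (simp add: x_def fun_eq_iff)
  have bd: "reduced n (Suc i # i # d)"
    by (rule reduced_if_same_perm_length[OF reduced_Cons(1)[OF b]]) (use d_set i i' wb len in simp_all)
  have Pb: "prod_list (map T b) = prod_list (map T (Suc i # i # d))"
    by (rule IH[OF reduced_Cons(1)[OF b] bd]) (use wb in simp_all)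
  have wc: "word_perm (i # Suc i # d) = word_perm c"
    using d(2) eq sgen_braid by (simp add: x_def fun_eq_iff)
  have cd: "reduced n (i # Suc i # d)"
    by (rule reduced_if_same_perm_length[OF reduced_Cons(1)[OF c]]) (use d_set i i' wc len in simp_all)
  have Pc: "prod_list (map T c) = prod_list (map T (i # Suc i # d))"
    by (rule IH[OF reduced_Cons(1)[OF c] cd]) (use wc len in simp_all)
  show ?thesis
    by (simp add: Pb Pc mult.assoc[symmetric] braid)
qed

lemma prod_reduced_eq_step:
  fixes T :: "nat \<Rightarrow> 'a::monoid_mult"
  assumes comm: "\<forall>i\<in>{1..<n}. \<forall>j\<in>{1..<n}. (i + 1 < j \<or> j + 1 < i) \<longrightarrow> T i * T j = T j * T i"
    and braid: "\<forall>i. 1 \<le> i \<and> i + 1 < n \<longrightarrow> T i * T (i+1) * T i = T (i+1) * T i * T (i+1)"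
    and IH: "\<And>u v. reduced n u \<Longrightarrow> reduced n v \<Longrightarrow> word_perm u = word_perm v \<Longrightarrow>
      length u = length b \<Longrightarrow> prod_list (map T u) = prod_list (map T v)"
    and b: "reduced n (i # b)" and c: "reduced n (j # c)"
    and eq: "word_perm (i # b) = word_perm (j # c)"
  shows "prod_list (map T (i # b)) = prod_list (map T (j # c))"
proof -
  have i: "i \<in> {1..<n}" and j: "j \<in> {1..<n}"
    using b c by (auto simp: reduced_def)
  consider "i = j" | "Suc i < j \<or> Suc j < i" | "j = Suc i" | "i = Suc j"
    by linarith
  then show ?thesis
  proof cases
    case 1
    have "word_perm b = sgen i \<circ> word_perm (i # b)"
      by (rule word_perm_Cons_cancel)
    also have "\<dots> = sgen j \<circ> word_perm (j # c)"
      by (simp only: 1 eq[unfolded 1])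
    also have "\<dots> = word_perm c"
      by (rule word_perm_Cons_cancel[symmetric])
    finally show ?thesis
      using IH[OF reduced_Cons(1)[OF b] reduced_Cons(1)[OF c]] 1 by simp
  next
    case 2
    then have "T i * T j = T j * T i"
      using comm[rule_format, OF i j] by simp
    from prod_reduced_eq_far_step[OF IH b c eq 2 this] show ?thesis .
  next
    case 3
    have "T i * T (Suc i) * T i = T (Suc i) * T i * T (Suc i)"
      using braid[rule_format, of i] i j 3 by simp
    from prod_reduced_eq_braid_step[OF IH b c[unfolded 3] eq[unfolded 3] this]
    show ?thesis unfolding 3 .
  next
    case 4
    have "length c = length b"
      using b c eq by (simp add: reduced_def)
    then have IH': "prod_list (map T u) = prod_list (map T v)"
      if "reduced n u" "reduced n v" "word_perm u = word_perm v" "length u = length c" for u v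
      using IH[OF that(1-3)] that(4) by simp
    have "T j * T (Suc j) * T j = T (Suc j) * T j * T (Suc j)"
      using braid[rule_format, of j] i j 4 by simp
    from prod_reduced_eq_braid_step[OF IH' c b[unfolded 4] eq[unfolded 4, symmetric] this]
    show ?thesis unfolding 4 by (rule sym)
  qed
qed

theorem prod_reduced_eq:
  fixes T :: "nat \<Rightarrow> 'a::monoid_mult"
  assumes comm: "\<forall>i\<in>{1..<n}. \<forall>j\<in>{1..<n}. (i + 1 < j \<or> j + 1 < i) \<longrightarrow> T i * T j = T j * T i"
    and braid: "\<forall>i. 1 \<le> i \<and> i + 1 < n \<longrightarrow> T i * T (i+1) * T i = T (i+1) * T i * T (i+1)"
  shows "reduced n b \<Longrightarrow> reduced n c \<Longrightarrow> word_perm b = word_perm c \<Longrightarrow>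
    prod_list (map T b) = prod_list (map T c)"
proof (induction "length b" arbitrary: b c rule: less_induct)
  case less
  have "length c = length b"
    using less.prems by (simp add: reduced_def)
  show ?case
  proof (cases b)
    case Nil
    then show ?thesis using \<open>length c = length b\<close> by simp
  next
    case (Cons i b')
    then obtain j c' where c: "c = j # c'"
      using \<open>length c = length b\<close> by (cases c) auto
    have "prod_list (map T (i # b')) = prod_list (map T (j # c'))"
    proof (rule prod_reduced_eq_step[OF comm braid])
      show "prod_list (map T u) = prod_list (map T v)"
        if "reduced n u" "reduced n v" "word_perm u = word_perm v" "length u = length b'" for u v
        using less.hyps[of u v] that Cons by simp
    qed (use less.prems Cons c in simp_all)
    then show ?thesis
      using Cons c by simp
  qed
qed

lemma Tw_eq_prod_reduced:
  fixes T :: "nat \<Rightarrow> 'h::ring_1"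
  assumes comm: "\<forall>i\<in>{1..<n}. \<forall>j\<in>{1..<n}. (i + 1 < j \<or> j + 1 < i) \<longrightarrow> T i * T j = T j * T i"
    and braid: "\<forall>i. 1 \<le> i \<and> i + 1 < n \<longrightarrow> T i * T (i+1) * T i = T (i+1) * T i * T (i+1)"
    and w: "w permutes {1..n}" and ws: "reduced n ws" "word_perm ws = w"
  shows "Tw n T w = prod_list (map T ws)"
  unfolding Tw_def using reduced_SOME_reduced_word[OF w] ws by (intro prod_reduced_eq[OF comm braid]) auto

section \<open>Schubert representations\<close>

lemma finite_Sn: "finite (Sn n)"
  unfolding Sn_def by (rule finite_permutations) simp

lemma sgen_comp_in_Sn: "w \<in> Sn n \<Longrightarrow> i \<in> {1..<n} \<Longrightarrow> w \<circ> sgen i \<in> Sn n"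
  unfolding Sn_def using permutes_compose[OF sgen_permutes] by blast

lemma w0_w0 [simp]: "w0 n (w0 n i) = i"
  by (cases "i \<in> {1..n}") (auto simp: w0_def)

lemma w0_permutes: "w0 n permutes {1..n}"
  unfolding permutes_def w0_def by (metis w0_def w0_w0)

lemma inv_w0: "inv (w0 n) = w0 n"
  by (metis inv_unique_comp w0_w0 comp_apply fun_eq_iff id_apply)

locale schubert_setting =
  fixes n :: nat
    and sc :: "Ah \<Rightarrow> 'h::ring_1" and T x :: "nat \<Rightarrow> 'h"
    and \<phi> :: "Ah \<Rightarrow> 'f::field" and t :: "nat \<Rightarrow> 'f"
    and scale :: "'f \<Rightarrow> 'v::ab_group_add \<Rightarrow> 'v" and act :: "'h \<Rightarrow> 'v \<Rightarrow> 'v"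
    and Y :: "(nat \<Rightarrow> nat) \<Rightarrow> 'v" and ev :: "'v \<Rightarrow> 'f"
  assumes hecke: "affine_hecke n sc T x"
    and rep: "schubert_rep n sc T x \<phi> t scale act Y ev"
begin

lemma T_comm: "\<forall>i\<in>{1..<n}. \<forall>j\<in>{1..<n}. (i + 1 < j \<or> j + 1 < i) \<longrightarrow> T i * T j = T j * T i"
  and T_braid: "\<forall>i. 1 \<le> i \<and> i + 1 < n \<longrightarrow> T i * T (i+1) * T i = T (i+1) * T i * T (i+1)"
  and T_quadratic: "i \<in> {1..<n} \<Longrightarrow> (T i + sc pA) * (T i - sc qA) = 0"
  and sc_central: "sc a * h = h * sc a"
  using hecke unfolding affine_hecke_def by blast+

lemma act_add_left: "act (h1 + h2) v = act h1 v + act h2 v"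
  and act_add_right: "act h (v1 + v2) = act h v1 + act h v2"
  and act_scale: "act h (scale c v) = scale c (act h v)"
  and act_mult: "act (h1 * h2) v = act h1 (act h2 v)"
  and act_one: "act 1 v = v"
  and act_sc: "act (sc a) v = scale (\<phi> a) v"
  and Y_eq_act_Tw: "w \<in> Sn n \<Longrightarrow> Y w = act (Tw n T (inv w \<circ> w0 n)) (Y (w0 n))"
  and inj_on_Y: "inj_on Y (Sn n)"
  and span_Y: "module.span scale (Y ` Sn n) = UNIV"
  and ev_Y_neq_0_iff: "w \<in> Sn n \<Longrightarrow> ev (Y w) \<noteq> 0 \<longleftrightarrow> w = id"
  and ev_act_x_Y: "i \<in> {1..n} \<Longrightarrow> w \<in> Sn n \<Longrightarrow> ev (act (x i) (Y w)) = t i * ev (Y w)"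
  using rep unfolding schubert_rep_def by blast+

sublocale V: vector_space scale
  using rep by (simp add: schubert_rep_def)

sublocale ev_linear: Vector_Spaces.linear scale "(*)" ev
  using rep by (simp add: schubert_rep_def)

lemma additive_act_left: "additive (\<lambda>h. act h v)"
  by unfold_locales (rule act_add_left)

lemma additive_act_right: "additive (act h)"
  by unfold_locales (rule act_add_right)

lemma act_sum_left: "act (\<Sum>k\<in>A. g k) v = (\<Sum>k\<in>A. act (g k) v)"
  by (rule additive.sum[OF additive_act_left])

lemma act_sum_right: "act h (\<Sum>k\<in>A. g k) = (\<Sum>k\<in>A. act h (g k))"
  by (rule additive.sum[OF additive_act_right])

lemma act_diff_left: "act (h1 - h2) v = act h1 v - act h2 v"
  by (rule additive.diff[OF additive_act_left])

lemma act_diff_right: "act h (v1 - v2) = act h v1 - act h v2"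
  by (rule additive.diff[OF additive_act_right])

lemma ev_Y: "w \<in> Sn n \<Longrightarrow> ev (Y w) = (if w = id then ev (Y id) else 0)"
  using ev_Y_neq_0_iff by auto

lemma ev_Y_id_neq_0: "ev (Y id) \<noteq> 0"
  using ev_Y_neq_0_iff[of id] by (simp add: Sn_def)

lemma Y_basis_expansion:
  obtains d where "v = (\<Sum>w\<in>Sn n. scale (d w) (Y w))"
proof -
  have "v \<in> V.span (Y ` Sn n)"
    using span_Y by simp
  then obtain c where "v = (\<Sum>y\<in>Y ` Sn n. scale (c y) y)"
    using V.span_finite[OF finite_imageI[OF finite_Sn]] by auto
  also have "\<dots> = (\<Sum>w\<in>Sn n. scale (c (Y w)) (Y w))"
    by (rule sum.reindex[OF inj_on_Y, unfolded o_def])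
  finally show ?thesis
    by (rule that)
qed

lemma Y_eq_act_prod_reduced:
  assumes w: "w \<in> Sn n" and ws: "reduced n ws" "word_perm ws = inv w \<circ> w0 n"
  shows "Y w = act (prod_list (map T ws)) (Y (w0 n))"
proof -
  have "inv w \<circ> w0 n permutes {1..n}"
    using w permutes_compose[OF w0_permutes permutes_inv] by (simp add: Sn_def)
  then show ?thesis
    using Y_eq_act_Tw[OF w] Tw_eq_prod_reduced[OF T_comm T_braid _ ws] by simp
qed

lemma T_act_Y_descent:
  assumes w: "w \<in> Sn n" and i: "i \<in> {1..<n}" and desc: "w (Suc i) < w i"
  shows "act (T i) (Y w) = Y (w \<circ> sgen i)"
proof -
  have wp: "w permutes {1..n}"
    using w by (simp add: Sn_def)
  define u where "u = inv w \<circ> w0 n"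
  have u: "u permutes {1..n}"
    unfolding u_def by (rule permutes_compose[OF w0_permutes permutes_inv[OF wp]])
  obtain ws where ws: "reduced n ws" "word_perm ws = u"
    using exists_reduced[OF u] .
  have "inv u = w0 n \<circ> w"
    unfolding u_def o_inv_distrib[OF permutes_bij[OF permutes_inv[OF wp]] permutes_bij[OF w0_permutes]]
      inv_w0 permutes_inv_inv[OF wp] ..
  moreover have "w i \<in> {1..n}" "w (Suc i) \<in> {1..n}"
    using i permutes_in_image[OF wp] by auto
  ultimately have "inv u i < inv u (Suc i)"
    using desc by (auto simp: w0_def)
  then have "reduced n (i # ws)"
    using perm_length_sgen_comp_ascent[OF u i] ws i by (simp add: reduced_def)
  moreover have "word_perm (i # ws) = inv (w \<circ> sgen i) \<circ> w0 n"
    using ws(2) by (simp add: u_def inv_comp_sgen permutes_bij[OF wp] comp_assoc)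
  ultimately have "Y (w \<circ> sgen i) = act (prod_list (map T (i # ws))) (Y (w0 n))"
    by (rule Y_eq_act_prod_reduced[OF sgen_comp_in_Sn[OF w i]])
  also have "\<dots> = act (T i) (Y w)"
    using Y_eq_act_prod_reduced[OF w ws(1)] ws(2) by (simp add: u_def act_mult)
  finally show ?thesis ..
qed

definition Tbar_gen :: "nat \<Rightarrow> 'h" where
  "Tbar_gen i = T i + sc pA - sc qA"

lemma Tbar_eq_prod_Tbar_gen: "Tbar n sc T w = prod_list (map Tbar_gen (SOME ws. reduced_word n w ws))"
  unfolding Tbar_def Tw_def Tbar_gen_def[abs_def] ..

lemma Tbar_gen_mult_T: "i \<in> {1..<n} \<Longrightarrow> Tbar_gen i * T i = sc pA * sc qA"
  using T_quadratic[of i] sc_central[of qA "T i"] by (simp add: Tbar_gen_def algebra_simps)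

lemma Tbar_gen_act_Y_descent:
  assumes "w \<in> Sn n" "i \<in> {1..<n}" "w (Suc i) < w i"
  shows "act (Tbar_gen i) (Y w) = Y (w \<circ> sgen i) + scale (\<phi> pA - \<phi> qA) (Y w)"
  by (simp add: Tbar_gen_def act_diff_left act_add_left act_sc T_act_Y_descent[OF assms]
      V.scale_left_diff_distrib)

lemma Tbar_gen_act_Y_ascent:
  assumes w: "w \<in> Sn n" and i: "i \<in> {1..<n}" and asc: "w i < w (Suc i)"
  shows "act (Tbar_gen i) (Y w) = scale (\<phi> pA * \<phi> qA) (Y (w \<circ> sgen i))"
proof -
  have "Y w = act (T i) (Y (w \<circ> sgen i))"
    using T_act_Y_descent[OF sgen_comp_in_Sn[OF w i] i] asc by (simp add: comp_assoc)
  then have "act (Tbar_gen i) (Y w) = act (Tbar_gen i * T i) (Y (w \<circ> sgen i))"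
    by (simp only: act_mult)
  then show ?thesis
    by (simp add: Tbar_gen_mult_T[OF i] act_mult act_sc mult.commute)
qed

lemma ev_act_Tbar_gen_Y_at_descent:
  assumes IH: "\<And>u. u \<in> Sn n \<Longrightarrow> ev (act A (Y u)) = (if u = y then c else 0)"
    and i: "i \<in> {1..<n}" and asc: "y i < y (Suc i)"
    and v: "v \<in> Sn n" and desc: "v (Suc i) < v i"
  shows "ev (act A (act (Tbar_gen i) (Y v))) = (if v = y \<circ> sgen i then c else 0)"
proof -
  have "v \<noteq> y"
    using asc desc by auto
  have "ev (act A (act (Tbar_gen i) (Y v)))
      = ev (act A (Y (v \<circ> sgen i))) + (\<phi> pA - \<phi> qA) * ev (act A (Y v))"
    by (simp add: Tbar_gen_act_Y_descent[OF v i desc] act_add_right act_scale ev_linear.add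
        ev_linear.scale)
  also have "\<dots> = (if v = y \<circ> sgen i then c else 0)"
    using IH[OF sgen_comp_in_Sn[OF v i]] IH[OF v] \<open>v \<noteq> y\<close>
    by (simp only: comp_sgen_eq_iff if_False mult_zero_right add_0_right)
  finally show ?thesis .
qed

lemma ev_act_Tbar_gen_Y_at_ascent:
  assumes IH: "\<And>u. u \<in> Sn n \<Longrightarrow> ev (act A (Y u)) = (if u = y then c else 0)"
    and i: "i \<in> {1..<n}" and asc: "y i < y (Suc i)"
    and v: "v \<in> Sn n" and asc': "v i < v (Suc i)"
  shows "ev (act A (act (Tbar_gen i) (Y v))) = (if v = y \<circ> sgen i then c else 0)"
proof -
  have "v \<circ> sgen i \<noteq> y"
  proof
    assume "v \<circ> sgen i = y"
    from fun_cong[OF this, of i] fun_cong[OF this, of "Suc i"] show False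
      using asc asc' by simp
  qed
  have "v \<noteq> y \<circ> sgen i"
  proof
    assume "v = y \<circ> sgen i"
    from fun_cong[OF this, of i] fun_cong[OF this, of "Suc i"] show False
      using asc asc' by simp
  qed
  have "ev (act A (act (Tbar_gen i) (Y v))) = \<phi> pA * \<phi> qA * ev (act A (Y (v \<circ> sgen i)))"
    by (simp add: Tbar_gen_act_Y_ascent[OF v i asc'] act_scale ev_linear.scale)
  also have "\<dots> = (if v = y \<circ> sgen i then c else 0)"
    using IH[OF sgen_comp_in_Sn[OF v i]] \<open>v \<circ> sgen i \<noteq> y\<close> \<open>v \<noteq> y \<circ> sgen i\<close>
    by (simp only: if_False mult_zero_right)
  finally show ?thesis .
qed

lemma ev_act_prod_Tbar_gen_Y:
  "reduced n ws \<Longrightarrow> v \<in> Sn n \<Longrightarrow>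
    ev (act (prod_list (map Tbar_gen ws)) (Y v)) = (if v = word_perm ws then ev (Y id) else 0)"
proof (induction ws arbitrary: v rule: rev_induct)
  case Nil
  then show ?case
    by (simp only: list.map prod_list.Nil act_one word_perm_Nil ev_Y)
next
  case (snoc i ws)
  have ws: "reduced n ws" and asc: "word_perm ws i < word_perm ws (Suc i)"
    using reduced_snoc[OF snoc.prems(1)] by blast+
  have i: "i \<in> {1..<n}"
    using snoc.prems(1) by (simp add: reduced_def)
  note IH = snoc.IH[OF ws]
  have "v i \<noteq> v (Suc i)"
    using permutes_apply_Suc_neq snoc.prems(2) by (auto simp: Sn_def)
  then have "ev (act (prod_list (map Tbar_gen ws)) (act (Tbar_gen i) (Y v)))
      = (if v = word_perm ws \<circ> sgen i then ev (Y id) else 0)"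
    using ev_act_Tbar_gen_Y_at_descent[OF IH i asc snoc.prems(2)]
      ev_act_Tbar_gen_Y_at_ascent[OF IH i asc snoc.prems(2)]
    by (cases "v (Suc i) < v i") simp_all
  moreover have "prod_list (map Tbar_gen (ws @ [i])) = prod_list (map Tbar_gen ws) * Tbar_gen i"
    by simp
  ultimately show ?case
    by (simp only: act_mult word_perm_snoc)
qed

lemma ev_Tbar_act_Y:
  assumes "w \<in> Sn n" "v \<in> Sn n"
  shows "ev (act (Tbar n sc T w) (Y v)) = (if v = w then ev (Y id) else 0)"
  using reduced_SOME_reduced_word[of w n] ev_act_prod_Tbar_gen_Y[OF _ assms(2)] assms(1)
  by (simp add: Tbar_eq_prod_Tbar_gen Sn_def)

lemma ev_Tbar_act_sum_Y:
  assumes w: "w \<in> Sn n"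
  shows "ev (act (Tbar n sc T w) (\<Sum>v\<in>Sn n. scale (c v) (Y v))) = c w * ev (Y id)"
proof -
  have "ev (act (Tbar n sc T w) (\<Sum>v\<in>Sn n. scale (c v) (Y v)))
      = (\<Sum>v\<in>Sn n. c v * ev (act (Tbar n sc T w) (Y v)))"
    by (simp add: act_sum_right act_scale ev_linear.sum ev_linear.scale)
  also have "\<dots> = (\<Sum>v\<in>Sn n. if v = w then c v * ev (Y id) else 0)"
    by (rule sum.cong[OF refl]) (simp add: ev_Tbar_act_Y[OF w])
  also have "\<dots> = c w * ev (Y id)"
    using w finite_Sn by simp
  finally show ?thesis .
qed

lemma eq_if_ev_Tbar_act_eq:
  assumes "\<And>w. w \<in> Sn n \<Longrightarrow> ev (act (Tbar n sc T w) a) = ev (act (Tbar n sc T w) b)"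
  shows "a = b"
proof -
  obtain d where d: "a - b = (\<Sum>w\<in>Sn n. scale (d w) (Y w))"
    by (rule Y_basis_expansion)
  have "d w = 0" if w: "w \<in> Sn n" for w
  proof -
    have "d w * ev (Y id) = ev (act (Tbar n sc T w) (a - b))"
      by (simp only: d ev_Tbar_act_sum_Y[OF w])
    also have "\<dots> = 0"
      by (simp add: act_diff_right ev_linear.diff assms[OF w])
    finally show ?thesis
      using ev_Y_id_neq_0 by simp
  qed
  then show "a = b"
    using d by simp
qed

lemma ev_act_x:
  assumes i: "i \<in> {1..n}"
  shows "ev (act (x i) v) = t i * ev v"
proof -
  obtain d where v: "v = (\<Sum>w\<in>Sn n. scale (d w) (Y w))"
    by (rule Y_basis_expansion)
  have "ev (act (x i) v) = (\<Sum>w\<in>Sn n. d w * ev (act (x i) (Y w)))"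
    by (simp add: v act_sum_right act_scale ev_linear.sum ev_linear.scale)
  also have "\<dots> = t i * (\<Sum>w\<in>Sn n. d w * ev (Y w))"
    unfolding sum_distrib_left
    by (rule sum.cong[OF refl]) (simp add: ev_act_x_Y[OF i] mult.left_commute)
  also have "(\<Sum>w\<in>Sn n. d w * ev (Y w)) = ev v"
    by (simp add: v ev_linear.sum ev_linear.scale)
  finally show ?thesis .
qed

lemma ev_act_power:
  assumes "\<And>v. ev (act h v) = c * ev v"
  shows "ev (act (h ^ k) v) = c ^ k * ev v"
  by (induction k arbitrary: v) (simp_all add: act_one act_mult assms)

lemma ev_act_prod_list:
  assumes "\<And>i v. i \<in> set is \<Longrightarrow> ev (act (f i) v) = g i * ev v"
  shows "ev (act (prod_list (map f is)) v) = prod_list (map g is) * ev v"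
  using assms by (induction "is" arbitrary: v) (simp_all add: act_one act_mult)

lemma ev_act_xmonH:
  assumes "Poly_Mapping.keys \<alpha> \<subseteq> {1..n}"
  shows "ev (act (xmonH x \<alpha>) v) = xmon t \<alpha> * ev v"
proof -
  let ?is = "sorted_list_of_set (Poly_Mapping.keys \<alpha>)"
  have "set ?is = Poly_Mapping.keys \<alpha>"
    by simp
  then have "ev (act (xmonH x \<alpha>) v) = prod_list (map (\<lambda>i. t i ^ Poly_Mapping.lookup \<alpha> i) ?is) * ev v"
    unfolding xmonH_def using assms by (intro ev_act_prod_list ev_act_power ev_act_x) auto
  also have "prod_list (map (\<lambda>i. t i ^ Poly_Mapping.lookup \<alpha> i) ?is) = xmon t \<alpha>"
    unfolding xmon_def by (simp add: prod.distinct_set_conv_list[symmetric])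
  finally show ?thesis .
qed

lemma ev_act_emb:
  assumes "is_xpoly n g"
  shows "ev (act (emb sc x g) v) = evalP \<phi> t g * ev v"
proof -
  have "ev (act (emb sc x g) v)
      = (\<Sum>\<alpha>\<in>Poly_Mapping.keys g. \<phi> (Poly_Mapping.lookup g \<alpha>) * ev (act (xmonH x \<alpha>) v))"
    by (simp add: emb_def act_sum_left act_mult act_sc ev_linear.sum ev_linear.scale)
  also have "\<dots> = (\<Sum>\<alpha>\<in>Poly_Mapping.keys g. \<phi> (Poly_Mapping.lookup g \<alpha>) * (xmon t \<alpha> * ev v))"
  proof (rule sum.cong[OF refl])
    fix \<alpha> assume "\<alpha> \<in> Poly_Mapping.keys g"
    then have "Poly_Mapping.keys \<alpha> \<subseteq> {1..n}"
      using assms by (auto simp: is_xpoly_def)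
    then show "\<phi> (Poly_Mapping.lookup g \<alpha>) * ev (act (xmonH x \<alpha>) v)
        = \<phi> (Poly_Mapping.lookup g \<alpha>) * (xmon t \<alpha> * ev v)"
      by (simp only: ev_act_xmonH)
  qed
  also have "\<dots> = evalP \<phi> t g * ev v"
    unfolding evalP_def sum_distrib_right by (simp only: mult.assoc)
  finally show ?thesis .
qed

lemma act_emb_Y:
  assumes P: "\<forall>u\<in>Sn n. \<forall>w\<in>Sn n. is_xpoly n (P u w)"
    and expansion: "\<forall>w\<in>Sn n. Tbar n sc T w * emb sc x f = (\<Sum>u\<in>Sn n. emb sc x (P u w) * Tbar n sc T u)"
    and u: "u \<in> Sn n"
  shows "act (emb sc x f) (Y u) = (\<Sum>w\<in>Sn n. scale (evalP \<phi> t (P u w)) (Y w))"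
proof (rule eq_if_ev_Tbar_act_eq)
  fix w assume w: "w \<in> Sn n"
  have "ev (act (Tbar n sc T w) (act (emb sc x f) (Y u)))
      = (\<Sum>u'\<in>Sn n. ev (act (emb sc x (P u' w)) (act (Tbar n sc T u') (Y u))))"
    by (simp add: act_mult[symmetric] expansion w act_sum_left ev_linear.sum)
  also have "\<dots> = (\<Sum>u'\<in>Sn n. if u' = u then evalP \<phi> t (P u w) * ev (Y id) else 0)"
    by (rule sum.cong[OF refl]) (use P w u in \<open>auto simp: ev_act_emb ev_Tbar_act_Y\<close>)
  also have "\<dots> = evalP \<phi> t (P u w) * ev (Y id)"
    using u finite_Sn by simp
  also have "\<dots> = ev (act (Tbar n sc T w) (\<Sum>w'\<in>Sn n. scale (evalP \<phi> t (P u w')) (Y w')))"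
    by (rule ev_Tbar_act_sum_Y[OF w, symmetric])
  finally show "ev (act (Tbar n sc T w) (act (emb sc x f) (Y u)))
      = ev (act (Tbar n sc T w) (\<Sum>w'\<in>Sn n. scale (evalP \<phi> t (P u w')) (Y w')))" .
qed

end

theorem theorem3p6:
  fixes n :: nat
    and sc :: "Ah \<Rightarrow> 'h::ring_1" and T x :: "nat \<Rightarrow> 'h"
    and \<phi> :: "Ah \<Rightarrow> 'f::field" and t :: "nat \<Rightarrow> 'f"
    and scale :: "'f \<Rightarrow> 'v::ab_group_add \<Rightarrow> 'v" and act :: "'h \<Rightarrow> 'v \<Rightarrow> 'v"
    and Y :: "(nat \<Rightarrow> nat) \<Rightarrow> 'v" and ev :: "'v \<Rightarrow> 'f"
    and f :: Apoly and P :: "(nat \<Rightarrow> nat) \<Rightarrow> (nat \<Rightarrow> nat) \<Rightarrow> Apoly"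
  assumes "affine_hecke n sc T x"
    and "schubert_rep n sc T x \<phi> t scale act Y ev"
    and "is_xpoly n f"
    and "\<forall>u\<in>Sn n. \<forall>w\<in>Sn n. is_xpoly n (P u w)"
    and "\<forall>w\<in>Sn n. Tbar n sc T w * emb sc x f = (\<Sum>u\<in>Sn n. emb sc x (P u w) * Tbar n sc T u)"
  shows "\<forall>u\<in>Sn n. act (emb sc x f) (Y u) = (\<Sum>w\<in>Sn n. scale (evalP \<phi> t (P u w)) (Y w))"
proof -
  interpret schubert_setting n sc T x \<phi> t scale act Y ev
    using assms(1,2) by unfold_locales
  show ?thesis
    using act_emb_Y[OF assms(4,5)] by blast
qed

end
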